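(* Let $X\subset U\subset\mathbb{R}^n$, where $U$ is open and $X$ is the closure in $U$ of its interior. Let $f:X\to\mathbb{R}$ and $p\in\mathbb{N}$, and suppose that $\nabla^pf:\tau^p(X)\to\mathbb{R}$. Then there is a $\mathcal{C}^p$ Whitney field $F=(F^\alpha)_{|\alpha|\le p}$ on $X$ such that $F^0=f$.
   Context: $\mathcal{P}_p$: real polynomials on $\mathbb{R}^n$ of degree $\le p$; $\mathcal{P}_p^*$ dual; $r=\dim\mathcal{P}_p$. For $\xi\in\mathcal{P}_p^*$, $b\in\mathbb{R}^n$, $|\alpha|\le p$: $\xi_\alpha(b):=\xi(\tfrac1{\alpha!}(x-b)^\alpha)$; $\delta_a(P)=P(a)$. A bundle over $X$ with fibres in $W$ is a subset of $X\times W$ with linear-subspace fibres. For a bundle $E\subset X\times\mathcal{P}_p^*$: $\Delta E=\{(a,b,\xi+\eta):a,b\in X,\xi\in E_a,\eta\in E_b,|a-b|^{p-|\alpha|}|\eta_\alpha(b)|\le1\ \forall|\alpha|\le p\}$, $E'=\{(a,\xi):(a,a,\xi)\in\overline{\Delta E}\}$, $\rho(E)=\{(a,\xi):\xi\in\operatorname{Span}E'_a\}$; $\tau^p(X):=\rho^{2r}(E_0)$ with $E_0=\{(a,\lambda\delta_a)\}$ (iterates constant from $2r$ on). For bundles $\Phi\subset X\times(\mathcal{P}_p^*\times\mathbb{R})$: $\Delta\Phi=\{(a,b,\xi+\eta,\lambda+\mu):(\xi,\lambda)\in\Phi_a,(\eta,\mu)\in\Phi_b,|a-b|^{p-|\alpha|}|\eta_\alpha(b)|\le1\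 \forall|\alpha|\le p\}$, $\Phi'=\{(a,\xi,\lambda):(a,a,\xi,\lambda)\in\overline{\Delta\Phi}\}$, $\rho(\Phi)$ fibrewise span of $\Phi'$; $\nabla^pf:=\rho^{2(r+1)}(\Phi_0)$ with $\Phi_0=\{(a,\lambda\delta_a,\lambda f(a))\}$. "$\nabla^pf:\tau^p(X)\to\mathbb{R}$" means each $\xi\in\tau^p_a(X)$ has exactly one $\lambda$ with $(a,\xi,\lambda)\in\nabla^pf$. A $\mathcal{C}^p$ Whitney field on $X$ is a family $F=(F^\alpha)_{|\alpha|\le p}$ of functions $X\to\mathbb{R}$ such that for every $c\in X$ and $|\alpha|\le p$, $\big(F^\alpha(b)-\sum_{|\beta|\le p-|\alpha|}\frac1{\beta!}F^{\alpha+\beta}(a)(b-a)^\beta\big)/|b-a|^{p-|\alpha|}\to0$ as $a,b\to c$ in $X$, $a\ne b$. *)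

theory Defs
  imports "HOL-Analysis.Analysis"
begin

(* Multi-indices on R^n (n = CARD('n)) are functions 'n => nat.
   The space P_p of polynomials of degree <= p has basis the monomials x^beta, |beta| <= p.
   A polynomial is represented by its coefficient function beta |-> coefficient of x^beta.
   A dual element xi in P_p^* is represented by the function beta |-> xi(x^beta)
   (zero outside |beta| <= p); the pairing is  xi(P) = sum_{|beta|<=p} xi(x^beta) * coeff_beta(P).
   The topology on P_p^* is the (product = pointwise) topology on functions, which on the
   finite-dimensional space of functions supported in {|beta| <= p} is the Euclidean one. *)

definition mideg :: "('n::finite \<Rightarrow> nat) \<Rightarrow> nat" where
  "mideg \<alpha> = (\<Sum>i\<in>UNIV. \<alpha> i)"

definition MI :: "nat \<Rightarrow> ('n::finite \<Rightarrow> nat) set" where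
  "MI p = {\<alpha>. mideg \<alpha> \<le> p}"

definition mifact :: "('n::finite \<Rightarrow> nat) \<Rightarrow> real" where
  "mifact \<alpha> = (\<Prod>i\<in>UNIV. fact (\<alpha> i))"

definition mipow :: "real^'n::finite \<Rightarrow> ('n \<Rightarrow> nat) \<Rightarrow> real" where
  "mipow x \<alpha> = (\<Prod>i\<in>UNIV. (x$i) ^ (\<alpha> i))"

definition dpair :: "nat \<Rightarrow> (('n::finite \<Rightarrow> nat) \<Rightarrow> real) \<Rightarrow> (('n \<Rightarrow> nat) \<Rightarrow> real) \<Rightarrow> real" where
  "dpair p \<xi> P = (\<Sum>\<beta>\<in>MI p. \<xi> \<beta> * P \<beta>)"

text \<open>coefficients of the polynomial (x - b)^alpha / alpha! (binomial expansion)\<close>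
definition smon :: "real^'n::finite \<Rightarrow> ('n \<Rightarrow> nat) \<Rightarrow> ('n \<Rightarrow> nat) \<Rightarrow> real" where
  "smon b \<alpha> \<beta> = (if (\<forall>i. \<beta> i \<le> \<alpha> i)
      then (\<Prod>i\<in>UNIV. real (\<alpha> i choose \<beta> i) * (- (b$i)) ^ (\<alpha> i - \<beta> i)) / mifact \<alpha>
      else 0)"

definition dcomp :: "nat \<Rightarrow> (('n::finite \<Rightarrow> nat) \<Rightarrow> real) \<Rightarrow> ('n \<Rightarrow> nat) \<Rightarrow> (real^'n) \<Rightarrow> real" where
  "dcomp p \<xi> \<alpha> b = dpair p \<xi> (smon b \<alpha>)"

definition delta :: "nat \<Rightarrow> real^'n::finite \<Rightarrow> ('n \<Rightarrow> nat) \<Rightarrow> real" where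
  "delta p a = (\<lambda>\<beta>. if \<beta> \<in> MI p then mipow a \<beta> else 0)"

definition DeltaB :: "nat \<Rightarrow> (real^'n::finite) set \<Rightarrow> ((real^'n) \<times> (('n \<Rightarrow> nat) \<Rightarrow> real)) set
    \<Rightarrow> ((real^'n) \<times> (real^'n) \<times> (('n \<Rightarrow> nat) \<Rightarrow> real)) set" where
  "DeltaB p X E = {(a, b, \<zeta>). a \<in> X \<and> b \<in> X \<and>
     (\<exists>\<xi> \<eta>. (a, \<xi>) \<in> E \<and> (b, \<eta>) \<in> E \<and> \<zeta> = (\<lambda>\<beta>. \<xi> \<beta> + \<eta> \<beta>) \<and>
        (\<forall>\<alpha>\<in>MI p. norm (a - b) ^ (p - mideg \<alpha>) * \<bar>dcomp p \<eta> \<alpha> b\<bar> \<le> 1))}"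

definition primeB :: "nat \<Rightarrow> (real^'n::finite) set \<Rightarrow> ((real^'n) \<times> (('n \<Rightarrow> nat) \<Rightarrow> real)) set
    \<Rightarrow> ((real^'n) \<times> (('n \<Rightarrow> nat) \<Rightarrow> real)) set" where
  "primeB p X E = {(a, \<xi>). a \<in> X \<and> (a, a, \<xi>) \<in> closure (DeltaB p X E)}"

text \<open>fibrewise linear span (finite linear combinations; span of the empty set is {0})\<close>
definition rhoB :: "nat \<Rightarrow> (real^'n::finite) set \<Rightarrow> ((real^'n) \<times> (('n \<Rightarrow> nat) \<Rightarrow> real)) set
    \<Rightarrow> ((real^'n) \<times> (('n \<Rightarrow> nat) \<Rightarrow> real)) set" where
  "rhoB p X E = {(a, \<xi>). a \<in> X \<and>
     (\<exists>S c. finite S \<and> S \<subseteq> {\<eta>. (a, \<eta>) \<in> primeB p X E} \<and>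
        \<xi> = (\<lambda>\<beta>. \<Sum>\<eta>\<in>S. c \<eta> * \<eta> \<beta>))}"

definition E0 :: "nat \<Rightarrow> (real^'n::finite) set \<Rightarrow> ((real^'n) \<times> (('n \<Rightarrow> nat) \<Rightarrow> real)) set" where
  "E0 p X = {(a, (\<lambda>\<beta>. l * delta p a \<beta>)) | a l. a \<in> X}"

definition rdim :: "nat \<Rightarrow> (real^'n::finite) set \<Rightarrow> nat" where
  "rdim p X = card (MI p :: ('n \<Rightarrow> nat) set)"

definition tau :: "nat \<Rightarrow> (real^'n::finite) set \<Rightarrow> ((real^'n) \<times> (('n \<Rightarrow> nat) \<Rightarrow> real)) set" where
  "tau p X = (rhoB p X ^^ (2 * rdim p X)) (E0 p X)"

definition DeltaF :: "nat \<Rightarrow> (real^'n::finite) set \<Rightarrow> ((real^'n) \<times> (('n \<Rightarrow> nat) \<Rightarrow> real) \<times> real) set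
    \<Rightarrow> ((real^'n) \<times> (real^'n) \<times> (('n \<Rightarrow> nat) \<Rightarrow> real) \<times> real) set" where
  "DeltaF p X \<Phi> = {(a, b, \<zeta>, \<nu>). a \<in> X \<and> b \<in> X \<and>
     (\<exists>\<xi> l \<eta> m. (a, \<xi>, l) \<in> \<Phi> \<and> (b, \<eta>, m) \<in> \<Phi> \<and> \<zeta> = (\<lambda>\<beta>. \<xi> \<beta> + \<eta> \<beta>) \<and> \<nu> = l + m \<and>
        (\<forall>\<alpha>\<in>MI p. norm (a - b) ^ (p - mideg \<alpha>) * \<bar>dcomp p \<eta> \<alpha> b\<bar> \<le> 1))}"

definition primeF :: "nat \<Rightarrow> (real^'n::finite) set \<Rightarrow> ((real^'n) \<times> (('n \<Rightarrow> nat) \<Rightarrow> real) \<times> real) set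
    \<Rightarrow> ((real^'n) \<times> (('n \<Rightarrow> nat) \<Rightarrow> real) \<times> real) set" where
  "primeF p X \<Phi> = {(a, \<xi>, l). a \<in> X \<and> (a, a, \<xi>, l) \<in> closure (DeltaF p X \<Phi>)}"

definition rhoF :: "nat \<Rightarrow> (real^'n::finite) set \<Rightarrow> ((real^'n) \<times> (('n \<Rightarrow> nat) \<Rightarrow> real) \<times> real) set
    \<Rightarrow> ((real^'n) \<times> (('n \<Rightarrow> nat) \<Rightarrow> real) \<times> real) set" where
  "rhoF p X \<Phi> = {(a, \<xi>, l). a \<in> X \<and>
     (\<exists>S c. finite S \<and> S \<subseteq> {(\<eta>, m). (a, \<eta>, m) \<in> primeF p X \<Phi>} \<and>
        \<xi> = (\<lambda>\<beta>. \<Sum>s\<in>S. c s * fst s \<beta>) \<and> l = (\<Sum>s\<in>S. c s * snd s))}"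

definition Phi0 :: "nat \<Rightarrow> (real^'n::finite) set \<Rightarrow> ((real^'n) \<Rightarrow> real) \<Rightarrow> ((real^'n) \<times> (('n \<Rightarrow> nat) \<Rightarrow> real) \<times> real) set" where
  "Phi0 p X f = {(a, (\<lambda>\<beta>. l * delta p a \<beta>), l * f a) | a l. a \<in> X}"

definition nabla :: "nat \<Rightarrow> (real^'n::finite) set \<Rightarrow> ((real^'n) \<Rightarrow> real) \<Rightarrow> ((real^'n) \<times> (('n \<Rightarrow> nat) \<Rightarrow> real) \<times> real) set" where
  "nabla p X f = (rhoF p X ^^ (2 * (rdim p X + 1))) (Phi0 p X f)"

definition nabla_is_function :: "nat \<Rightarrow> (real^'n::finite) set \<Rightarrow> ((real^'n) \<Rightarrow> real) \<Rightarrow> bool" where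
  "nabla_is_function p X f \<longleftrightarrow>
     (\<forall>a \<xi>. (a, \<xi>) \<in> tau p X \<longrightarrow> (\<exists>!l. (a, \<xi>, l) \<in> nabla p X f))"

definition whitney_field :: "nat \<Rightarrow> (real^'n::finite) set \<Rightarrow> (('n \<Rightarrow> nat) \<Rightarrow> (real^'n) \<Rightarrow> real) \<Rightarrow> bool" where
  "whitney_field p X F \<longleftrightarrow>
     (\<forall>c\<in>X. \<forall>\<alpha>\<in>MI p.
        ((\<lambda>(a, b). (F \<alpha> b - (\<Sum>\<beta>\<in>MI (p - mideg \<alpha>).
              F (\<lambda>i. \<alpha> i + \<beta> i) a * mipow (b - a) \<beta> / mifact \<beta>))
            / norm (b - a) ^ (p - mideg \<alpha>)) \<longlongrightarrow> 0)
        (at (c, c) within {(a, b). a \<in> X \<and> b \<in> X \<and> a \<noteq> b}))"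

end

theory Submission
  imports Defs
begin

(*
  Write D^g_a for the functional P |-> (d^g P)(a) on P_p, and Phi_m for the m-th iterate of rho
  applied to Phi_0.  By induction on |g|, every D^g_a with |g| <= p lies, together with some value
  F^g(a), in the fibre of Phi_(|g|+1) over a; for g = 0 this is the pair (delta_a, f(a)) itself.
  In the induction step a point c of X is approximated by interior points x, and the difference
  quotients (D^g_(x + h e_i) - D^g_x) / h are admissible sums in Delta Phi_(|g|+1): the bound
  required of their second summand holds precisely because |g| < p.  They converge to
  D^(g + e_i)_c, which therefore lies in Phi_(|g|+2).

  The Whitney condition comes from the same mechanism.  By Taylor's formula for polynomials,
  D^g_y - sum_k (y - x)^k / k! D^(g+k)_x = 0, so scaling by |y - x|^(|g| - p) gives admissible
  sums whose functional part is 0 and whose value is the Whitney remainder quotient at (x, y).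
  Were these values not to tend to 0, a rescaled limit would put some (c, 0, l) with l <> 0 into
  nabla^p f, impossible since (c, 0) is in tau^p(X) and (c, 0, 0) is in nabla^p f.  The same
  contradiction shows that limits of admissible sums always carry a value.  As p < r, all
  iterates involved are below the 2(r+1)-th one that defines nabla^p f.
*)

section \<open>Multi-indices\<close>

definition mi_below :: "('n::finite \<Rightarrow> nat) \<Rightarrow> ('n \<Rightarrow> nat) set" where
  "mi_below \<alpha> = {\<beta>. \<forall>i. \<beta> i \<le> \<alpha> i}"

lemma mi_below_eq_PiE: "mi_below \<alpha> = PiE UNIV (\<lambda>i. {..\<alpha> i})"
  unfolding mi_below_def PiE_UNIV_domain by auto

lemma mideg_mono: "(\<And>i. \<beta> i \<le> \<alpha> i) \<Longrightarrow> mideg \<beta> \<le> mideg \<alpha>"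
  unfolding mideg_def by (intro sum_mono)

lemma mideg_add: "mideg (\<lambda>i. \<alpha> i + \<beta> i) = mideg \<alpha> + mideg \<beta>"
  unfolding mideg_def by (simp add: sum.distrib)

lemma mideg_diff:
  assumes "\<And>i. \<beta> i \<le> \<alpha> i"
  shows "mideg (\<lambda>i. \<alpha> i - \<beta> i) = mideg \<alpha> - mideg \<beta>"
proof -
  have "mideg (\<lambda>i. \<alpha> i - \<beta> i) + mideg \<beta> = mideg \<alpha>"
    unfolding mideg_add[symmetric] using assms by (simp add: mideg_def)
  then show ?thesis by simp
qed

lemma mideg_fun_upd_Suc: "mideg (\<gamma>(i := Suc (\<gamma> i))) = Suc (mideg \<gamma>)"
proof -
  have "mideg (\<gamma>(i := Suc (\<gamma> i))) = Suc (\<gamma> i) + (\<Sum>j\<in>UNIV - {i}. \<gamma> j)"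
    unfolding mideg_def by (subst sum.remove[of _ i]) (auto intro!: sum.cong)
  also have "\<dots> = Suc (mideg \<gamma>)"
    unfolding mideg_def by (subst (2) sum.remove[of _ i]) auto
  finally show ?thesis .
qed

lemma mideg_Suc_cases:
  assumes "mideg \<gamma>' = Suc m"
  obtains \<gamma> i where "\<gamma>' = \<gamma>(i := Suc (\<gamma> i))" and "mideg \<gamma> = m"
proof -
  obtain i where "\<gamma>' i \<noteq> 0"
    using assms unfolding mideg_def by (metis Zero_not_Suc sum.neutral)
  define \<gamma> where "\<gamma> = \<gamma>'(i := \<gamma>' i - 1)"
  have "\<gamma>' = \<gamma>(i := Suc (\<gamma> i))"
    using \<open>\<gamma>' i \<noteq> 0\<close> unfolding \<gamma>_def by auto
  moreover have "mideg \<gamma> = m"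
    using assms mideg_fun_upd_Suc[of \<gamma> i] calculation by simp
  ultimately show thesis by (rule that)
qed

lemma mi_below_subset_MI: "mideg \<alpha> \<le> p \<Longrightarrow> mi_below \<alpha> \<subseteq> MI p"
  unfolding mi_below_def MI_def using mideg_mono order_trans by blast

lemma finite_MI: "finite (MI p :: ('n::finite \<Rightarrow> nat) set)"
proof (rule finite_subset)
  show "MI p \<subseteq> mi_below (\<lambda>_::'n. p)"
  proof
    fix \<beta> :: "'n \<Rightarrow> nat"
    assume "\<beta> \<in> MI p"
    then have "\<beta> i \<le> p" for i
      using member_le_sum[of i UNIV \<beta>] unfolding MI_def mideg_def by simp
    then show "\<beta> \<in> mi_below (\<lambda>_. p)"
      unfolding mi_below_def by simp
  qed
  show "finite (mi_below (\<lambda>_::'n. p))"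
    unfolding mi_below_eq_PiE by (intro finite_PiE) auto
qed

lemma MI_0: "MI 0 = {\<lambda>i. 0}"
  unfolding MI_def mideg_def by (auto intro!: ext)

lemma rdim_gt: "p < rdim p (X :: (real^'n::finite) set)"
proof -
  define g where "g k = (\<lambda>j::'n. if j = undefined then k else 0)" for k :: nat
  have "card {..p} \<le> card (MI p :: ('n \<Rightarrow> nat) set)"
  proof (rule card_inj_on_le[OF _ _ finite_MI])
    show "inj_on g {..p}"
      unfolding inj_on_def g_def by metis
    show "g ` {..p} \<subseteq> MI p"
      by (auto simp: MI_def mideg_def g_def)
  qed
  then show ?thesis
    unfolding rdim_def by simp
qed

section \<open>Derivative functionals\<close>

lemma sum_binomial_fact:
  fixes u v :: real
  shows "(\<Sum>k\<le>m. u ^ k / fact k * (v ^ (m - k) / fact (m - k))) = (u + v) ^ m / fact m"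
proof -
  have "(u + v) ^ m / fact m = (\<Sum>k\<le>m. real (m choose k) * u ^ k * v ^ (m - k) / fact m)"
    by (simp add: binomial_ring sum_divide_distrib)
  also have "\<dots> = (\<Sum>k\<le>m. u ^ k / fact k * (v ^ (m - k) / fact (m - k)))"
    by (intro sum.cong refl) (simp add: binomial_fact)
  finally show ?thesis by simp
qed

text \<open>The one-variable case of \<open>dcomp_deriv_functional\<close>: the \<open>g\<close>-th derivative of
  \<open>(x - y)\<^sup>a / a!\<close> at \<open>x = y\<close>, computed through the binomial expansion.\<close>

lemma sum_ffact_binomial_expansion:
  fixes y :: real
  shows "(\<Sum>k\<le>a. (if g \<le> k then fact k / fact (k - g) * y ^ (k - g) else 0)
            * (real (a choose k) * (- y) ^ (a - k)) / fact a)
       = (if a = g then 1 else 0)"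
proof (cases "g \<le> a")
  case False
  then show ?thesis by (intro trans[OF sum.neutral]) auto
next
  case True
  define n where "n = a - g"
  have "(\<Sum>k\<le>a. (if g \<le> k then fact k / fact (k - g) * y ^ (k - g) else 0)
            * (real (a choose k) * (- y) ^ (a - k)) / fact a)
      = (\<Sum>k\<in>{g..a}. fact k / fact (k - g) * y ^ (k - g)
            * (real (a choose k) * (- y) ^ (a - k)) / fact a)"
    by (rule sum.mono_neutral_cong_right) auto
  also have "\<dots> = (\<Sum>j\<le>n. fact (j + g) / fact j * y ^ j
                    * (real (a choose (j + g)) * (- y) ^ (a - (j + g))) / fact a)"
  proof -
    have "{g..a} = {0 + g..n + g}"
      using True by (simp add: n_def)
    then show ?thesis
      by (simp only: sum.shift_bounds_cl_nat_ivl atLeast0AtMost) simp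
  qed
  also have "\<dots> = (\<Sum>j\<le>n. y ^ j / fact j * ((- y) ^ (n - j) / fact (n - j)))"
  proof (intro sum.cong refl)
    fix j assume "j \<in> {..n}"
    then have "j + g \<le> a" and "a - (j + g) = n - j"
      using True by (auto simp: n_def)
    then show "fact (j + g) / fact j * y ^ j
          * (real (a choose (j + g)) * (- y) ^ (a - (j + g))) / fact a
        = y ^ j / fact j * ((- y) ^ (n - j) / fact (n - j))"
      by (simp add: binomial_fact)
  qed
  also have "\<dots> = (y + - y) ^ n / fact n"
    by (rule sum_binomial_fact)
  also have "\<dots> = (if a = g then 1 else 0)"
    using True by (simp add: n_def)
  finally show ?thesis .
qed

text \<open>The one-variable case of \<open>deriv_functional_taylor\<close>: Taylor expansion at \<open>a\<close> of the
  \<open>g\<close>-th derivative of \<open>x\<^sup>d\<close>.\<close>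

lemma sum_taylor_ffact_power:
  fixes a b :: real
  assumes "g \<le> d"
  shows "(\<Sum>k\<le>d - g. (b - a) ^ k / fact k * (fact d / fact (d - g - k) * a ^ (d - g - k)))
       = fact d / fact (d - g) * b ^ (d - g)"
proof -
  have "(\<Sum>k\<le>d - g. (b - a) ^ k / fact k * (fact d / fact (d - g - k) * a ^ (d - g - k)))
      = fact d * (\<Sum>k\<le>d - g. (b - a) ^ k / fact k * (a ^ (d - g - k) / fact (d - g - k)))"
    by (simp add: sum_distrib_left field_simps)
  also have "\<dots> = fact d * ((b - a + a) ^ (d - g) / fact (d - g))"
    by (simp only: sum_binomial_fact)
  finally show ?thesis by simp
qed

text \<open>The functional \<open>P \<mapsto> \<partial>\<^sup>\<gamma>P(a)\<close> on \<open>\<P>\<^sub>p\<close>, given by its values on the monomials \<open>x\<^sup>\<delta>\<close>.\<close>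

definition deriv_functional :: "nat \<Rightarrow> ('n::finite \<Rightarrow> nat) \<Rightarrow> real^'n \<Rightarrow> ('n \<Rightarrow> nat) \<Rightarrow> real" where
  "deriv_functional p \<gamma> a \<delta> =
     (if \<delta> \<in> MI p \<and> (\<forall>i. \<gamma> i \<le> \<delta> i)
      then (\<Prod>i\<in>UNIV. fact (\<delta> i) / fact (\<delta> i - \<gamma> i)) * mipow a (\<lambda>i. \<delta> i - \<gamma> i)
      else 0)"

lemma deriv_functional_0: "deriv_functional p (\<lambda>i. 0) a = delta p a"
  unfolding deriv_functional_def delta_def by (auto intro!: ext)

lemma dcomp_deriv_functional:
  assumes "\<alpha> \<in> MI p"
  shows "dcomp p (deriv_functional p \<gamma> b) \<alpha> b = (if \<alpha> = \<gamma> then 1 else 0)"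
proof -
  define g where "g i k = (if \<gamma> i \<le> k then fact k / fact (k - \<gamma> i) * (b$i) ^ (k - \<gamma> i) else 0)
      * (real (\<alpha> i choose k) * (- (b$i)) ^ (\<alpha> i - k)) / fact (\<alpha> i)" for i k
  have sub: "mi_below \<alpha> \<subseteq> MI p"
    using assms mi_below_subset_MI unfolding MI_def by blast
  have "dcomp p (deriv_functional p \<gamma> b) \<alpha> b = (\<Sum>\<beta>\<in>MI p. deriv_functional p \<gamma> b \<beta> * smon b \<alpha> \<beta>)"
    unfolding dcomp_def dpair_def ..
  also have "\<dots> = (\<Sum>\<beta>\<in>mi_below \<alpha>. \<Prod>i\<in>UNIV. g i (\<beta> i))"
  proof (rule sum.mono_neutral_cong_right[OF finite_MI sub])
    show "\<forall>\<beta>\<in>MI p - mi_below \<alpha>. deriv_functional p \<gamma> b \<beta> * smon b \<alpha> \<beta> = 0"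
      unfolding smon_def mi_below_def by auto
    fix \<beta> assume "\<beta> \<in> mi_below \<alpha>"
    then have le: "\<forall>i. \<beta> i \<le> \<alpha> i" and "\<beta> \<in> MI p"
      using sub unfolding mi_below_def by auto
    show "deriv_functional p \<gamma> b \<beta> * smon b \<alpha> \<beta> = (\<Prod>i\<in>UNIV. g i (\<beta> i))"
    proof (cases "\<forall>i. \<gamma> i \<le> \<beta> i")
      case True
      then show ?thesis
        using le \<open>\<beta> \<in> MI p\<close>
        unfolding deriv_functional_def smon_def mipow_def mifact_def g_def
        by (simp add: prod.distrib[symmetric] prod_dividef[symmetric])
    next
      case False
      then obtain j where "\<not> \<gamma> j \<le> \<beta> j" by auto
      then show ?thesis
        unfolding deriv_functional_def g_def by (auto intro!: prod_zero[symmetric] bexI[of _ j])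
    qed
  qed
  also have "\<dots> = (\<Prod>i\<in>UNIV. \<Sum>k\<le>\<alpha> i. g i k)"
    unfolding mi_below_eq_PiE by (rule prod_sum_PiE[symmetric]) auto
  also have "\<dots> = (\<Prod>i\<in>UNIV. if \<alpha> i = \<gamma> i then 1 else 0)"
    unfolding g_def by (simp only: sum_ffact_binomial_expansion)
  also have "\<dots> = (if \<alpha> = \<gamma> then 1 else 0)"
    by (auto simp: fun_eq_iff)
  finally show ?thesis .
qed

lemma deriv_functional_taylor:
  assumes "mideg \<alpha> \<le> p"
  shows "deriv_functional p \<alpha> b \<delta>
       = (\<Sum>\<beta>\<in>MI (p - mideg \<alpha>). mipow (b - a) \<beta> / mifact \<beta> * deriv_functional p (\<lambda>i. \<alpha> i + \<beta> i) a \<delta>)"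
proof (cases "\<delta> \<in> MI p \<and> (\<forall>i. \<alpha> i \<le> \<delta> i)")
  case False
  have "deriv_functional p (\<lambda>i. \<alpha> i + \<beta> i) a \<delta> = 0" for \<beta>
    unfolding deriv_functional_def by (rule if_not_P) (use False add_leD1 in blast)
  moreover have "deriv_functional p \<alpha> b \<delta> = 0"
    unfolding deriv_functional_def using False by auto
  ultimately show ?thesis by simp
next
  case True
  define m where "m i = \<delta> i - \<alpha> i" for i
  define h where "h i k = (b$i - a$i) ^ k / fact k
      * (fact (\<delta> i) / fact (\<delta> i - \<alpha> i - k) * (a$i) ^ (\<delta> i - \<alpha> i - k))" for i k
  have "mideg m = mideg \<delta> - mideg \<alpha>"
    unfolding m_def using True by (intro mideg_diff) auto
  then have sub: "mi_below m \<subseteq> MI (p - mideg \<alpha>)"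
    using True by (intro mi_below_subset_MI) (auto simp: MI_def)
  have "(\<Sum>\<beta>\<in>MI (p - mideg \<alpha>). mipow (b - a) \<beta> / mifact \<beta> * deriv_functional p (\<lambda>i. \<alpha> i + \<beta> i) a \<delta>)
      = (\<Sum>\<beta>\<in>mi_below m. \<Prod>i\<in>UNIV. h i (\<beta> i))"
  proof (rule sum.mono_neutral_cong_right[OF finite_MI sub])
    show "\<forall>\<beta>\<in>MI (p - mideg \<alpha>) - mi_below m.
        mipow (b - a) \<beta> / mifact \<beta> * deriv_functional p (\<lambda>i. \<alpha> i + \<beta> i) a \<delta> = 0"
    proof
      fix \<beta> assume "\<beta> \<in> MI (p - mideg \<alpha>) - mi_below m"
      then have "\<not> (\<forall>i. \<alpha> i + \<beta> i \<le> \<delta> i)"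
        using True unfolding mi_below_def m_def by (auto simp: le_diff_conv2 add.commute)
      then show "mipow (b - a) \<beta> / mifact \<beta> * deriv_functional p (\<lambda>i. \<alpha> i + \<beta> i) a \<delta> = 0"
        unfolding deriv_functional_def by auto
    qed
    fix \<beta> assume "\<beta> \<in> mi_below m"
    then have "\<forall>i. \<alpha> i + \<beta> i \<le> \<delta> i"
      using True unfolding mi_below_def m_def by (auto simp: le_diff_conv2 add.commute)
    then show "mipow (b - a) \<beta> / mifact \<beta> * deriv_functional p (\<lambda>i. \<alpha> i + \<beta> i) a \<delta>
        = (\<Prod>i\<in>UNIV. h i (\<beta> i))"
      using True unfolding deriv_functional_def mipow_def mifact_def h_def
      by (simp add: prod.distrib[symmetric] prod_dividef[symmetric] diff_diff_left)
  qed
  also have "\<dots> = (\<Prod>i\<in>UNIV. \<Sum>k\<le>m i. h i k)"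
    unfolding mi_below_eq_PiE by (rule prod_sum_PiE[symmetric]) auto
  also have "\<dots> = (\<Prod>i\<in>UNIV. fact (\<delta> i) / fact (\<delta> i - \<alpha> i) * (b$i) ^ (\<delta> i - \<alpha> i))"
    unfolding h_def m_def using True by (intro prod.cong refl sum_taylor_ffact_power) auto
  also have "\<dots> = deriv_functional p \<alpha> b \<delta>"
    unfolding deriv_functional_def mipow_def using True
    by (simp only: prod.distrib[symmetric] if_True) (simp add: field_simps)
  finally show ?thesis by simp
qed

lemma power_difference_quotient_tendsto:
  fixes y h :: "nat \<Rightarrow> real"
  assumes "y \<longlonglongrightarrow> c" "h \<longlonglongrightarrow> 0" "\<And>k. h k \<noteq> 0"
  shows "(\<lambda>k. ((y k + h k) ^ n - y k ^ n) / h k) \<longlonglongrightarrow> real n * c ^ (n - 1)"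
proof -
  have "((y k + h k) ^ n - y k ^ n) / h k = (\<Sum>j<n. y k ^ (n - Suc j) * (y k + h k) ^ j)" for k
    using assms(3)[of k] by (simp add: power_diff_sumr2)
  moreover have "(\<lambda>k. \<Sum>j<n. y k ^ (n - Suc j) * (y k + h k) ^ j)
      \<longlonglongrightarrow> (\<Sum>j<n. c ^ (n - Suc j) * (c + 0) ^ j)"
    by (intro tendsto_intros assms)
  moreover have "(\<Sum>j<n. c ^ (n - Suc j) * (c + 0) ^ j) = real n * c ^ (n - 1)"
    by (simp add: power_add[symmetric])
  ultimately show ?thesis by simp
qed

lemma mipow_split: "mipow x m = (x$i) ^ m i * mipow x (m(i := 0))"
proof -
  have "mipow x (m(i := 0)) = (\<Prod>j\<in>UNIV - {i}. (x$j) ^ m j)"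
    unfolding mipow_def by (subst prod.remove[of _ i]) (auto intro!: prod.cong)
  then show ?thesis
    unfolding mipow_def by (simp add: prod.remove[of _ i])
qed

lemma mipow_add_axis_exponent_0: "mipow (x + h *\<^sub>R axis i 1) (m(i := 0)) = mipow x (m(i := 0))"
  unfolding mipow_def by (intro prod.cong) (auto simp: axis_def)

lemma tendsto_mipow: "(x \<longlongrightarrow> c) F \<Longrightarrow> ((\<lambda>k. mipow (x k) m) \<longlongrightarrow> mipow c m) F"
  unfolding mipow_def by (intro tendsto_intros)

lemma mipow_difference_quotient_tendsto:
  fixes x :: "nat \<Rightarrow> real^'n::finite"
  assumes "x \<longlonglongrightarrow> c" "h \<longlonglongrightarrow> 0" "\<And>k. h k \<noteq> 0"
  shows "(\<lambda>k. (mipow (x k + h k *\<^sub>R axis i 1) m - mipow (x k) m) / h k)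
           \<longlonglongrightarrow> real (m i) * mipow c (m(i := m i - 1))"
proof -
  have "mipow (x k + h k *\<^sub>R axis i 1) m - mipow (x k) m
      = ((x k $ i + h k) ^ m i - (x k $ i) ^ m i) * mipow (x k) (m(i := 0))" for k
    by (subst (1 2) mipow_split[of _ _ i]) (simp add: mipow_add_axis_exponent_0 left_diff_distrib)
  then have "(\<lambda>k. (mipow (x k + h k *\<^sub>R axis i 1) m - mipow (x k) m) / h k)
      = (\<lambda>k. ((x k $ i + h k) ^ m i - (x k $ i) ^ m i) / h k * mipow (x k) (m(i := 0)))"
    by simp
  moreover have "\<dots> \<longlonglongrightarrow> real (m i) * (c $ i) ^ (m i - 1) * mipow c (m(i := 0))"
    by (intro tendsto_mult power_difference_quotient_tendsto tendsto_vec_nth tendsto_mipow assms)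
  moreover have "(c $ i) ^ (m i - 1) * mipow c (m(i := 0)) = mipow c (m(i := m i - 1))"
    using mipow_split[of c "m(i := m i - 1)" i] by simp
  ultimately show ?thesis by (simp add: mult.assoc)
qed

lemma deriv_functional_difference_quotient_tendsto:
  fixes x :: "nat \<Rightarrow> real^'n::finite"
  assumes "x \<longlonglongrightarrow> c" "h \<longlonglongrightarrow> 0" "\<And>k. h k \<noteq> 0"
  shows "(\<lambda>k. (deriv_functional p \<gamma> (x k + h k *\<^sub>R axis i 1) \<delta> - deriv_functional p \<gamma> (x k) \<delta>)
             / h k)
           \<longlonglongrightarrow> deriv_functional p (\<gamma>(i := Suc (\<gamma> i))) c \<delta>"
    (is "?dq \<longlonglongrightarrow> deriv_functional p ?\<gamma>' c \<delta>")
proof (cases "\<delta> \<in> MI p \<and> (\<forall>j. \<gamma> j \<le> \<delta> j)")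
  case False
  then have "\<not> (\<delta> \<in> MI p \<and> (\<forall>j. ?\<gamma>' j \<le> \<delta> j))"
    by (metis Suc_leD fun_upd_apply)
  then have "deriv_functional p ?\<gamma>' c \<delta> = 0"
    unfolding deriv_functional_def by (rule if_not_P)
  moreover have "deriv_functional p \<gamma> y \<delta> = 0" for y
    unfolding deriv_functional_def using False by (rule if_not_P)
  ultimately show ?thesis by simp
next
  case True
  define C where "C \<gamma> = (\<Prod>j\<in>UNIV. fact (\<delta> j) / fact (\<delta> j - \<gamma> j) :: real)" for \<gamma>
  define m where "m j = \<delta> j - \<gamma> j" for j
  have "?dq = (\<lambda>k. C \<gamma> * ((mipow (x k + h k *\<^sub>R axis i 1) m - mipow (x k) m) / h k))"
    using True unfolding deriv_functional_def C_def m_def by (simp add: right_diff_distrib)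
  moreover have "\<dots> \<longlonglongrightarrow> C \<gamma> * (real (m i) * mipow c (m(i := m i - 1)))"
    by (intro tendsto_mult tendsto_const mipow_difference_quotient_tendsto assms)
  moreover have "C \<gamma> * (real (m i) * mipow c (m(i := m i - 1))) = deriv_functional p ?\<gamma>' c \<delta>"
  proof (cases "\<gamma> i < \<delta> i")
    case False
    then show ?thesis
      unfolding deriv_functional_def m_def by (auto intro!: exI[of _ i])
  next
    case less: True
    define d where "d = \<delta> i - Suc (\<gamma> i)"
    define R where "R = (\<Prod>j\<in>UNIV - {i}. fact (\<delta> j) / fact (\<delta> j - \<gamma> j) :: real)"
    have "m i = Suc d"
      using less unfolding m_def d_def by simp
    have C\<gamma>: "C \<gamma> = fact (\<delta> i) / fact (Suc d) * R"
      unfolding C_def R_def using \<open>m i = Suc d\<close> by (simp add: prod.remove[of UNIV i] m_def)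
    have C\<gamma>': "C ?\<gamma>' = fact (\<delta> i) / fact d * R"
      unfolding C_def R_def d_def by (subst prod.remove[of _ i]) (auto intro!: prod.cong)
    have "C ?\<gamma>' = C \<gamma> * real (m i)"
      unfolding C\<gamma> C\<gamma>' \<open>m i = Suc d\<close> by (simp add: divide_simps)
    moreover have "(\<lambda>j. \<delta> j - ?\<gamma>' j) = m(i := m i - 1)"
      unfolding m_def by auto
    ultimately show ?thesis
      using True less unfolding deriv_functional_def C_def by (auto simp: Suc_le_eq)
  qed
  ultimately show ?thesis by simp
qed

section \<open>Iterated bundles with values\<close>

definition nabla_iter :: "nat \<Rightarrow> (real^'n::finite) set \<Rightarrow> (real^'n \<Rightarrow> real) \<Rightarrow> nat
    \<Rightarrow> ((real^'n) \<times> (('n \<Rightarrow> nat) \<Rightarrow> real) \<times> real) set" where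
  "nabla_iter p X f k = (rhoF p X ^^ k) (Phi0 p X f)"

lemma nabla_iter_Suc: "nabla_iter p X f (Suc k) = rhoF p X (nabla_iter p X f k)"
  unfolding nabla_iter_def by simp

lemma nabla_eq_nabla_iter: "nabla p X f = nabla_iter p X f (2 * (rdim p X + 1))"
  unfolding nabla_def nabla_iter_def ..

lemma rhoF_in_X: "(a, \<xi>, l) \<in> rhoF p X \<Phi> \<Longrightarrow> a \<in> X"
  unfolding rhoF_def by auto

lemma rhoF_zero: "a \<in> X \<Longrightarrow> (a, \<lambda>\<beta>. 0, 0) \<in> rhoF p X \<Phi>"
  unfolding rhoF_def by (auto intro!: exI[of _ "{}"])

lemma rhoF_scale:
  assumes "(a, \<xi>, l) \<in> rhoF p X \<Phi>"
  shows "(a, \<lambda>\<beta>. t * \<xi> \<beta>, t * l) \<in> rhoF p X \<Phi>"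
proof -
  from assms obtain S c where S: "a \<in> X" "finite S" "S \<subseteq> {(\<eta>, m). (a, \<eta>, m) \<in> primeF p X \<Phi>}"
    "\<xi> = (\<lambda>\<beta>. \<Sum>s\<in>S. c s * fst s \<beta>)" "l = (\<Sum>s\<in>S. c s * snd s)"
    unfolding rhoF_def by auto
  then show ?thesis
    unfolding rhoF_def
    by (auto intro!: exI[of _ S] exI[of _ "\<lambda>s. t * c s"] simp: sum_distrib_left mult.assoc)
qed

lemma rhoF_add:
  assumes "(a, \<xi>, l) \<in> rhoF p X \<Phi>" "(a, \<xi>', l') \<in> rhoF p X \<Phi>"
  shows "(a, \<lambda>\<beta>. \<xi> \<beta> + \<xi>' \<beta>, l + l') \<in> rhoF p X \<Phi>"
proof -
  from assms(1) obtain S c where S: "a \<in> X" "finite S" "S \<subseteq> {(\<eta>, m). (a, \<eta>, m) \<in> primeF p X \<Phi>}"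
    "\<xi> = (\<lambda>\<beta>. \<Sum>s\<in>S. c s * fst s \<beta>)" "l = (\<Sum>s\<in>S. c s * snd s)"
    unfolding rhoF_def by auto
  from assms(2) obtain S' c' where S': "finite S'" "S' \<subseteq> {(\<eta>, m). (a, \<eta>, m) \<in> primeF p X \<Phi>}"
    "\<xi>' = (\<lambda>\<beta>. \<Sum>s\<in>S'. c' s * fst s \<beta>)" "l' = (\<Sum>s\<in>S'. c' s * snd s)"
    unfolding rhoF_def by auto
  define d where "d s = (if s \<in> S then c s else 0) + (if s \<in> S' then c' s else 0)" for s
  have "(\<Sum>s\<in>S \<union> S'. d s * g s) = (\<Sum>s\<in>S. c s * g s) + (\<Sum>s\<in>S'. c' s * g s)" for g :: "_ \<Rightarrow> real"
  proof -
    have "(\<Sum>s\<in>S \<union> S'. d s * g s)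
        = (\<Sum>s\<in>S \<union> S'. (if s \<in> S then c s * g s else 0) + (if s \<in> S' then c' s * g s else 0))"
      unfolding d_def by (intro sum.cong) (auto simp: distrib_right)
    also have "\<dots> = (\<Sum>s\<in>S. c s * g s) + (\<Sum>s\<in>S'. c' s * g s)"
      using S S' by (simp add: sum.distrib sum.If_cases Int_absorb1 Int_absorb2)
    finally show ?thesis .
  qed
  then show ?thesis
    unfolding rhoF_def using S S' by (auto intro!: exI[of _ "S \<union> S'"] exI[of _ d])
qed

lemma rhoF_sum:
  assumes "a \<in> X" "finite B" "\<And>x. x \<in> B \<Longrightarrow> (a, G x, L x) \<in> rhoF p X \<Phi>"
  shows "(a, \<lambda>\<beta>. \<Sum>x\<in>B. w x * G x \<beta>, \<Sum>x\<in>B. w x * L x) \<in> rhoF p X \<Phi>"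
  using assms(2,3)
proof (induction B rule: finite_induct)
  case empty
  then show ?case using rhoF_zero[OF assms(1)] by simp
next
  case (insert x B)
  have "(a, \<lambda>\<beta>. w x * G x \<beta> + (\<Sum>x\<in>B. w x * G x \<beta>), w x * L x + (\<Sum>x\<in>B. w x * L x))
      \<in> rhoF p X \<Phi>"
    by (rule rhoF_add[OF rhoF_scale]) (use insert in auto)
  then show ?case
    using insert by simp
qed

lemma primeF_subset_rhoF: "primeF p X \<Phi> \<subseteq> rhoF p X \<Phi>"
proof
  fix x assume x: "x \<in> primeF p X \<Phi>"
  obtain a \<xi> l where "x = (a, \<xi>, l)" by (cases x)
  with x show "x \<in> rhoF p X \<Phi>"
    unfolding rhoF_def primeF_def
    by (auto intro!: exI[of _ "{(\<xi>, l)}"] exI[of _ "\<lambda>_. 1"])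
qed

lemma DeltaF_I:
  assumes "a \<in> X" "b \<in> X" "(a, \<xi>, l) \<in> \<Phi>" "(b, \<eta>, m) \<in> \<Phi>"
    "\<forall>\<alpha>\<in>MI p. norm (a - b) ^ (p - mideg \<alpha>) * \<bar>dcomp p \<eta> \<alpha> b\<bar> \<le> 1"
  shows "(a, b, \<lambda>\<beta>. \<xi> \<beta> + \<eta> \<beta>, l + m) \<in> DeltaF p X \<Phi>"
  unfolding DeltaF_def using assms by blast

lemma dcomp_scale: "dcomp p (\<lambda>\<beta>. t * \<eta> \<beta>) \<alpha> b = t * dcomp p \<eta> \<alpha> b"
  unfolding dcomp_def dpair_def by (simp add: sum_distrib_left mult.assoc)

lemma primeF_self:
  assumes "(a, \<xi>, l) \<in> \<Phi>" "a \<in> X" "(a, \<lambda>\<beta>. 0, 0) \<in> \<Phi>"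
  shows "(a, \<xi>, l) \<in> primeF p X \<Phi>"
proof -
  have "(a, a, \<xi>, l) \<in> DeltaF p X \<Phi>"
    using DeltaF_I[of a X a \<xi> l \<Phi> "\<lambda>\<beta>. 0" 0 p] assms dcomp_scale[of p 0 \<xi>] by simp
  then show ?thesis
    unfolding primeF_def using assms closure_subset by auto
qed

lemma nabla_iter_in_X: "(a, \<xi>, l) \<in> nabla_iter p X f k \<Longrightarrow> a \<in> X"
  unfolding nabla_iter_def Phi0_def by (cases k) (auto dest: rhoF_in_X)

lemma nabla_iter_zero: "a \<in> X \<Longrightarrow> (a, \<lambda>\<beta>. 0, 0) \<in> nabla_iter p X f k"
  unfolding nabla_iter_def Phi0_def by (cases k) (auto simp: rhoF_zero intro!: exI[of _ 0])

lemma nabla_iter_mono: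
  assumes "k \<le> m"
  shows "nabla_iter p X f k \<subseteq> nabla_iter p X f m"
proof (rule lift_Suc_mono_le[OF _ assms])
  show "nabla_iter p X f k \<subseteq> nabla_iter p X f (Suc k)" for k
  proof
    fix x assume x: "x \<in> nabla_iter p X f k"
    obtain a \<xi> l where x_eq: "x = (a, \<xi>, l)" by (cases x)
    with x have "a \<in> X"
      by (simp add: nabla_iter_in_X)
    with x x_eq have "x \<in> primeF p X (nabla_iter p X f k)"
      by (simp add: primeF_self nabla_iter_zero)
    then show "x \<in> nabla_iter p X f (Suc k)"
      unfolding nabla_iter_Suc using primeF_subset_rhoF by blast
  qed
qed

lemma Phi0_in_nabla_iter:
  assumes "a \<in> X"
  shows "(a, delta p a, f a) \<in> nabla_iter p X f k"
proof -
  have "(a, \<lambda>\<beta>. 1 * delta p a \<beta>, 1 * f a) \<in> nabla_iter p X f 0"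
    unfolding nabla_iter_def Phi0_def funpow_0 using assms by blast
  then show ?thesis
    using nabla_iter_mono[of 0 k] by auto
qed

lemma tendsto_fun_componentwise:
  fixes f :: "'a \<Rightarrow> 'i \<Rightarrow> 'b::topological_space"
  assumes "\<And>i. ((\<lambda>x. f x i) \<longlongrightarrow> l i) F"
  shows "(f \<longlongrightarrow> l) F"
proof -
  have "limitin (product_topology (\<lambda>i. euclidean) UNIV) f l F"
    unfolding limitin_componentwise using assms by auto
  then show ?thesis
    by (simp add: euclidean_product_topology)
qed

lemma DeltaF_scale:
  assumes "(a, b, \<zeta>, \<nu>) \<in> DeltaF p X (rhoF p X \<Psi>)" "\<bar>t\<bar> \<le> 1"
  shows "(a, b, \<lambda>\<beta>. t * \<zeta> \<beta>, t * \<nu>) \<in> DeltaF p X (rhoF p X \<Psi>)"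
proof -
  from assms(1) obtain \<xi> l \<eta> m where
    H: "a \<in> X" "b \<in> X" "(a, \<xi>, l) \<in> rhoF p X \<Psi>" "(b, \<eta>, m) \<in> rhoF p X \<Psi>"
      "\<zeta> = (\<lambda>\<beta>. \<xi> \<beta> + \<eta> \<beta>)" "\<nu> = l + m"
      and bound: "\<forall>\<alpha>\<in>MI p. norm (a - b) ^ (p - mideg \<alpha>) * \<bar>dcomp p \<eta> \<alpha> b\<bar> \<le> 1"
    unfolding DeltaF_def by auto
  have "norm (a - b) ^ (p - mideg \<alpha>) * \<bar>dcomp p (\<lambda>\<beta>. t * \<eta> \<beta>) \<alpha> b\<bar> \<le> 1" if "\<alpha> \<in> MI p" for \<alpha>
  proof -
    have "norm (a - b) ^ (p - mideg \<alpha>) * \<bar>dcomp p (\<lambda>\<beta>. t * \<eta> \<beta>) \<alpha> b\<bar>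
        = \<bar>t\<bar> * (norm (a - b) ^ (p - mideg \<alpha>) * \<bar>dcomp p \<eta> \<alpha> b\<bar>)"
      by (simp add: dcomp_scale abs_mult)
    also have "\<dots> \<le> 1 * 1"
      using bound that assms(2) by (intro mult_mono) auto
    finally show ?thesis by simp
  qed
  moreover have "(a, \<lambda>\<beta>. t * \<xi> \<beta>, t * l) \<in> rhoF p X \<Psi>" "(b, \<lambda>\<beta>. t * \<eta> \<beta>, t * m) \<in> rhoF p X \<Psi>"
    using H(3,4) by (simp_all add: rhoF_scale)
  ultimately have "(a, b, \<lambda>\<beta>. t * \<xi> \<beta> + t * \<eta> \<beta>, t * l + t * m) \<in> DeltaF p X (rhoF p X \<Psi>)"
    using H(1,2) by (intro DeltaF_I) auto
  then show ?thesis
    using H by (simp add: distrib_left)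
qed

lemma DeltaF_limit_in_rhoF:
  fixes a b :: "nat \<Rightarrow> real^'n::finite"
  assumes "c \<in> X" "a \<longlonglongrightarrow> c" "b \<longlonglongrightarrow> c" "\<And>\<beta>. (\<lambda>k. \<zeta> k \<beta>) \<longlonglongrightarrow> \<zeta>\<^sub>0 \<beta>" "\<nu> \<longlonglongrightarrow> \<nu>\<^sub>0"
    and "\<And>k. (a k, b k, \<zeta> k, \<nu> k) \<in> DeltaF p X \<Phi>"
  shows "(c, \<zeta>\<^sub>0, \<nu>\<^sub>0) \<in> rhoF p X \<Phi>"
proof -
  have "(\<lambda>k. (a k, b k, \<zeta> k, \<nu> k)) \<longlonglongrightarrow> (c, c, \<zeta>\<^sub>0, \<nu>\<^sub>0)"
    using assms(2-5) by (intro tendsto_Pair tendsto_fun_componentwise)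
  then have "(c, c, \<zeta>\<^sub>0, \<nu>\<^sub>0) \<in> closure (DeltaF p X \<Phi>)"
    by (intro Lim_in_closed_set[of _ _ sequentially])
       (use assms(6) closure_subset in \<open>auto intro!: always_eventually\<close>)
  then show ?thesis
    using assms(1) primeF_subset_rhoF unfolding primeF_def by blast
qed

text \<open>This is where the hypothesis on \<open>\<nabla>\<^sup>pf\<close> enters: \<open>\<tau>\<^sup>p(X)\<close> contains the zero
  functional, whose unique value is therefore \<open>0\<close>.\<close>

lemma nabla_iter_zero_functional:
  assumes "nabla_is_function p X f" "k \<le> 2 * (rdim p X + 1)"
    and "(c, \<lambda>\<beta>. 0, d) \<in> nabla_iter p X f k"
  shows "d = 0"
proof -
  have "c \<in> X"
    using assms(3) nabla_iter_in_X by blast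
  then have "(c, \<lambda>\<beta>. 0) \<in> tau p X"
    unfolding tau_def
    by (cases "2 * rdim p X") (auto simp: rhoB_def E0_def intro!: exI[of _ "{}"] exI[of _ 0])
  moreover have "(c, \<lambda>\<beta>. 0, d) \<in> nabla p X f" "(c, \<lambda>\<beta>. 0, 0) \<in> nabla p X f"
    unfolding nabla_eq_nabla_iter using assms(2,3) nabla_iter_mono \<open>c \<in> X\<close> nabla_iter_zero by blast+
  ultimately show ?thesis
    using assms(1) unfolding nabla_is_function_def by blast
qed

lemma rescaled_convergent_subsequence:
  fixes \<nu> :: "nat \<Rightarrow> real"
  obtains r \<sigma> w where "strict_mono r" "(\<lambda>j. inverse (max 1 \<bar>\<nu> (r j)\<bar>)) \<longlonglongrightarrow> \<sigma>"
    "(\<lambda>j. inverse (max 1 \<bar>\<nu> (r j)\<bar>) * \<nu> (r j)) \<longlonglongrightarrow> w" "\<sigma> = 0 \<Longrightarrow> \<bar>w\<bar> = 1"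
proof -
  define s where "s j = inverse (max 1 \<bar>\<nu> j\<bar>)" for j
  have "bounded (range (\<lambda>j. (s j, s j * \<nu> j)))"
  proof (rule bounded_subset)
    show "bounded ({0..1 :: real} \<times> {-1..1 :: real})"
      by (auto intro!: bounded_Times)
    show "range (\<lambda>j. (s j, s j * \<nu> j)) \<subseteq> {0..1} \<times> {-1..1}"
      by (auto simp: s_def abs_le_iff field_simps max_def)
  qed
  then obtain r l where r: "strict_mono r" and lim: "((\<lambda>j. (s j, s j * \<nu> j)) \<circ> r) \<longlonglongrightarrow> l"
    using bounded_imp_convergent_subsequence by blast
  obtain \<sigma> w where "l = (\<sigma>, w)" by (cases l)
  with lim have \<sigma>: "(\<lambda>j. s (r j)) \<longlonglongrightarrow> \<sigma>" and w: "(\<lambda>j. s (r j) * \<nu> (r j)) \<longlonglongrightarrow> w"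
    using tendsto_fst[OF lim] tendsto_snd[OF lim] by (simp_all add: o_def)
  have "\<bar>w\<bar> = 1" if "\<sigma> = 0"
  proof -
    have "\<forall>\<^sub>F j in sequentially. s (r j) < 1"
      using \<sigma> that by (intro order_tendstoD) auto
    then have "\<forall>\<^sub>F j in sequentially. \<bar>s (r j) * \<nu> (r j)\<bar> = 1"
      by eventually_elim (auto simp: s_def abs_mult max_def split: if_splits)
    then have "(\<lambda>j. \<bar>s (r j) * \<nu> (r j)\<bar>) \<longlonglongrightarrow> 1"
      by (rule tendsto_eventually)
    then show ?thesis
      using tendsto_rabs[OF w] LIMSEQ_unique by blast
  qed
  with r \<sigma> w show thesis
    unfolding s_def by (rule that)
qed

lemma DeltaF_limit_in_nabla_iter:
  fixes a b :: "nat \<Rightarrow> real^'n::finite"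
  assumes nf: "nabla_is_function p X f" and k: "Suc (Suc k) \<le> 2 * (rdim p X + 1)"
    and "c \<in> X" "a \<longlonglongrightarrow> c" "b \<longlonglongrightarrow> c" "\<And>\<beta>. (\<lambda>j. \<zeta> j \<beta>) \<longlonglongrightarrow> D \<beta>"
    and mem: "\<And>j. (a j, b j, \<zeta> j, \<nu> j) \<in> DeltaF p X (nabla_iter p X f (Suc k))"
  shows "\<exists>l. (c, D, l) \<in> nabla_iter p X f (Suc (Suc k))"
proof -
  \<comment> \<open>The values \<open>\<nu> j\<close> may be unbounded, so they are first rescaled into \<open>[-1, 1]\<close>.\<close>
  obtain r \<sigma> w where r: "strict_mono r" and \<sigma>: "(\<lambda>j. inverse (max 1 \<bar>\<nu> (r j)\<bar>)) \<longlonglongrightarrow> \<sigma>"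
    and w: "(\<lambda>j. inverse (max 1 \<bar>\<nu> (r j)\<bar>) * \<nu> (r j)) \<longlonglongrightarrow> w" and \<sigma>_0: "\<sigma> = 0 \<Longrightarrow> \<bar>w\<bar> = 1"
    by (rule rescaled_convergent_subsequence[of \<nu>]) blast
  have "(\<lambda>j. a (r j)) \<longlonglongrightarrow> c" "(\<lambda>j. b (r j)) \<longlonglongrightarrow> c"
    using LIMSEQ_subseq_LIMSEQ[OF _ r] assms(4,5) by (auto simp: o_def)
  moreover have "(\<lambda>j. inverse (max 1 \<bar>\<nu> (r j)\<bar>) * \<zeta> (r j) \<beta>) \<longlonglongrightarrow> \<sigma> * D \<beta>" for \<beta>
    using LIMSEQ_subseq_LIMSEQ[OF assms(6) r] by (intro tendsto_mult \<sigma>) (simp add: o_def)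
  moreover have "(a (r j), b (r j), \<lambda>\<beta>. inverse (max 1 \<bar>\<nu> (r j)\<bar>) * \<zeta> (r j) \<beta>,
      inverse (max 1 \<bar>\<nu> (r j)\<bar>) * \<nu> (r j)) \<in> DeltaF p X (rhoF p X (nabla_iter p X f k))" for j
    by (rule DeltaF_scale[OF mem[of "r j", unfolded nabla_iter_Suc]]) (simp add: inverse_le_1_iff)
  ultimately have lim_mem: "(c, \<lambda>\<beta>. \<sigma> * D \<beta>, w) \<in> nabla_iter p X f (Suc (Suc k))"
    unfolding nabla_iter_Suc by (rule DeltaF_limit_in_rhoF[OF \<open>c \<in> X\<close> _ _ _ w])
  have "\<sigma> \<noteq> 0"
  proof
    assume "\<sigma> = 0"
    with lim_mem have "(c, \<lambda>\<beta>. 0, w) \<in> nabla_iter p X f (Suc (Suc k))"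
      by simp
    then have "w = 0"
      by (rule nabla_iter_zero_functional[OF nf k])
    with \<sigma>_0 \<open>\<sigma> = 0\<close> show False
      by simp
  qed
  have "(c, \<lambda>\<beta>. (1 / \<sigma>) * (\<sigma> * D \<beta>), (1 / \<sigma>) * w) \<in> nabla_iter p X f (Suc (Suc k))"
    using lim_mem unfolding nabla_iter_Suc by (rule rhoF_scale)
  with \<open>\<sigma> \<noteq> 0\<close> show ?thesis
    by auto
qed

lemma DeltaF_zero_functional_tendsto_0:
  fixes a b :: "nat \<Rightarrow> real^'n::finite"
  assumes nf: "nabla_is_function p X f" and k: "Suc (Suc k) \<le> 2 * (rdim p X + 1)"
    and "c \<in> X" "a \<longlonglongrightarrow> c" "b \<longlonglongrightarrow> c"
    and mem: "\<And>j. (a j, b j, \<lambda>\<beta>. 0, \<nu> j) \<in> DeltaF p X (nabla_iter p X f (Suc k))"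
  shows "\<nu> \<longlonglongrightarrow> 0"
proof (rule ccontr)
  assume "\<not> \<nu> \<longlonglongrightarrow> 0"
  then obtain e where "e > 0" and "infinite {j. e \<le> \<bar>\<nu> j\<bar>}"
    by (auto simp: tendsto_iff not_eventually INFM_iff_infinite
        cofinite_eq_sequentially[symmetric] not_less)
  then obtain r :: "nat \<Rightarrow> nat" where r: "strict_mono r" and e: "\<And>j. e \<le> \<bar>\<nu> (r j)\<bar>"
    using infinite_enumerate by blast
  define t where "t j = min 1 e / \<nu> (r j)" for j
  have "(\<lambda>j. a (r j)) \<longlonglongrightarrow> c" "(\<lambda>j. b (r j)) \<longlonglongrightarrow> c"
    using LIMSEQ_subseq_LIMSEQ[OF _ r] assms(4,5) by (auto simp: o_def)
  moreover have "(a (r j), b (r j), \<lambda>\<beta>. 0, min 1 e) \<in> DeltaF p X (rhoF p X (nabla_iter p X f k))"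
    for j
  proof -
    have "\<bar>t j\<bar> \<le> 1" and t_\<nu>: "t j * \<nu> (r j) = min 1 e"
      using e[of j] \<open>e > 0\<close> by (auto simp: t_def abs_div min_def)
    then show ?thesis
      using DeltaF_scale[OF mem[of "r j", unfolded nabla_iter_Suc] \<open>\<bar>t j\<bar> \<le> 1\<close>] by (simp add: t_\<nu>)
  qed
  ultimately have "(c, \<lambda>\<beta>. 0, min 1 e) \<in> nabla_iter p X f (Suc (Suc k))"
    unfolding nabla_iter_Suc
    by (rule DeltaF_limit_in_rhoF[OF \<open>c \<in> X\<close> _ _ tendsto_const tendsto_const])
  then have "min 1 e = 0"
    by (rule nabla_iter_zero_functional[OF nf k])
  with \<open>e > 0\<close> show False by simp
qed

section \<open>Differentiation inside the bundles\<close>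

lemma closure_interior_shift_sequences:
  fixes X :: "'a::real_normed_vector set"
  assumes "c \<in> closure (interior X)"
  obtains x h where "x \<longlonglongrightarrow> c" "h \<longlonglongrightarrow> 0" "\<And>k. 0 < h k" "\<And>k. h k \<le> 1"
    "\<And>k. x k \<in> X" "\<And>k. x k + h k *\<^sub>R v \<in> X"
proof -
  obtain x where x: "\<And>k. x k \<in> interior X" "x \<longlonglongrightarrow> c"
    using assms closure_sequential by blast
  have "\<forall>k. \<exists>\<rho>. \<rho> > 0 \<and> ball (x k) \<rho> \<subseteq> X"
    using x(1) mem_interior by blast
  then obtain \<rho> where \<rho>: "\<And>k. \<rho> k > 0" "\<And>k. ball (x k) (\<rho> k) \<subseteq> X"
    by (auto simp: choice_iff)
  define h where "h k = min (inverse (real (Suc k))) (\<rho> k / (norm v + 1))" for k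
  have h_pos: "0 < h k" for k
    unfolding h_def using \<rho>(1)[of k] by (simp add: add_nonneg_pos)
  have h_le_1: "h k \<le> 1" for k
    unfolding h_def by (rule min.coboundedI1) (simp add: inverse_le_1_iff)
  have h_0: "h \<longlonglongrightarrow> 0"
    by (rule Lim_null_comparison[OF _ LIMSEQ_inverse_real_of_nat])
       (use h_pos in \<open>auto simp: h_def less_imp_le\<close>)
  have x_in: "x k \<in> X" for k
    using \<rho>[of k] by auto
  have shift_in: "x k + h k *\<^sub>R v \<in> X" for k
  proof -
    have "h k * norm v \<le> \<rho> k / (norm v + 1) * norm v"
      unfolding h_def by (intro mult_right_mono) auto
    also have "\<dots> = \<rho> k * (norm v / (norm v + 1))"
      by simp
    also have "\<dots> < \<rho> k * 1"
    proof (intro mult_strict_left_mono \<rho>(1))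
      have "0 < norm v + 1"
        using norm_ge_zero[of v] by linarith
      then show "norm v / (norm v + 1) < 1"
        by (simp add: divide_less_eq_1)
    qed
    finally have "dist (x k) (x k + h k *\<^sub>R v) < \<rho> k"
      using h_pos[of k] by (simp add: dist_norm)
    then show ?thesis
      using \<rho>(2)[of k] by auto
  qed
  show thesis
    by (rule that[OF x(2) h_0 h_pos h_le_1 x_in shift_in])
qed

lemma DeltaF_difference_quotient:
  assumes "a \<in> X" "b \<in> X" "mideg \<gamma> < p" "norm (b - a) = h" "0 < h" "h \<le> 1"
    and "(a, deriv_functional p \<gamma> a, l) \<in> rhoF p X \<Psi>" "(b, deriv_functional p \<gamma> b, l') \<in> rhoF p X \<Psi>"
  shows "(a, b, \<lambda>\<delta>. (deriv_functional p \<gamma> b \<delta> - deriv_functional p \<gamma> a \<delta>) / h, (l' - l) / h)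
           \<in> DeltaF p X (rhoF p X \<Psi>)"
proof -
  have bound:
    "norm (a - b) ^ (p - mideg \<alpha>) * \<bar>dcomp p (\<lambda>\<delta>. 1 / h * deriv_functional p \<gamma> b \<delta>) \<alpha> b\<bar> \<le> 1"
    if "\<alpha> \<in> MI p" for \<alpha>
  proof (cases "\<alpha> = \<gamma>")
    case True
    have "norm (a - b) ^ (p - mideg \<alpha>) * \<bar>dcomp p (\<lambda>\<delta>. 1 / h * deriv_functional p \<gamma> b \<delta>) \<alpha> b\<bar>
        = h ^ (p - mideg \<gamma>) / h"
      using True assms(4,5) that unfolding dcomp_scale
      by (simp add: dcomp_deriv_functional norm_minus_commute)
    also have "\<dots> = h ^ (p - mideg \<gamma> - 1)"
      using assms(3,5) by (simp add: power_diff)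
    also have "\<dots> \<le> 1"
      using assms(5,6) by (intro power_le_one) auto
    finally show ?thesis .
  qed (use that in \<open>simp only: dcomp_scale dcomp_deriv_functional, simp\<close>)
  have "(a, b, \<lambda>\<delta>. - 1 / h * deriv_functional p \<gamma> a \<delta> + 1 / h * deriv_functional p \<gamma> b \<delta>,
        - 1 / h * l + 1 / h * l') \<in> DeltaF p X (rhoF p X \<Psi>)"
    using bound by (intro DeltaF_I assms(1,2) rhoF_scale[OF assms(7)] rhoF_scale[OF assms(8)]) blast
  then show ?thesis
    by (simp add: diff_divide_distrib)
qed

lemma deriv_functional_in_nabla_iter_Suc:
  assumes nf: "nabla_is_function p X f" and X: "X \<subseteq> closure (interior X)"
    and "mideg \<gamma> < p" and k: "Suc (Suc m) \<le> 2 * (rdim p X + 1)"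
    and IH: "\<And>a. a \<in> X \<Longrightarrow> \<exists>l. (a, deriv_functional p \<gamma> a, l) \<in> nabla_iter p X f (Suc m)"
    and "c \<in> X"
  shows "\<exists>l. (c, deriv_functional p (\<gamma>(i := Suc (\<gamma> i))) c, l) \<in> nabla_iter p X f (Suc (Suc m))"
proof -
  have "c \<in> closure (interior X)"
    using X \<open>c \<in> X\<close> by blast
  then obtain x h where x: "x \<longlonglongrightarrow> c" and h: "h \<longlonglongrightarrow> 0" "\<And>k. 0 < h k" "\<And>k. h k \<le> 1"
    and x_in: "\<And>k. x k \<in> X" and shift_in: "\<And>k. x k + h k *\<^sub>R axis i 1 \<in> X"
    by (rule closure_interior_shift_sequences[where v = "axis i 1"]) blast
  define b where "b k = x k + h k *\<^sub>R axis i 1" for k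
  have "b \<longlonglongrightarrow> c + 0 *\<^sub>R axis i 1"
    unfolding b_def by (intro tendsto_intros x h(1))
  then have "b \<longlonglongrightarrow> c"
    by simp
  have "\<forall>k. \<exists>l. (x k, deriv_functional p \<gamma> (x k), l) \<in> nabla_iter p X f (Suc m)"
    using IH x_in by blast
  then obtain l where l: "\<And>k. (x k, deriv_functional p \<gamma> (x k), l k) \<in> nabla_iter p X f (Suc m)"
    by (auto simp: choice_iff)
  have "\<forall>k. \<exists>l'. (b k, deriv_functional p \<gamma> (b k), l') \<in> nabla_iter p X f (Suc m)"
    using IH shift_in unfolding b_def by blast
  then obtain l' where l': "\<And>k. (b k, deriv_functional p \<gamma> (b k), l' k) \<in> nabla_iter p X f (Suc m)"
    by (auto simp: choice_iff)
  define \<zeta> where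
    "\<zeta> k \<delta> = (deriv_functional p \<gamma> (b k) \<delta> - deriv_functional p \<gamma> (x k) \<delta>) / h k" for k \<delta>
  have "(\<lambda>k. \<zeta> k \<delta>) \<longlonglongrightarrow> deriv_functional p (\<gamma>(i := Suc (\<gamma> i))) c \<delta>" for \<delta>
    unfolding \<zeta>_def b_def using x h(1) less_imp_neq[OF h(2), symmetric]
    by (rule deriv_functional_difference_quotient_tendsto)
  moreover have "(x k, b k, \<zeta> k, (l' k - l k) / h k) \<in> DeltaF p X (nabla_iter p X f (Suc m))" for k
    unfolding nabla_iter_Suc \<zeta>_def
    using x_in shift_in \<open>mideg \<gamma> < p\<close> h(2,3)
      l[of k, unfolded nabla_iter_Suc] l'[of k, unfolded nabla_iter_Suc]
    by (intro DeltaF_difference_quotient) (auto simp: b_def abs_of_pos[OF h(2)])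
  ultimately show ?thesis
    by (rule DeltaF_limit_in_nabla_iter[OF nf k \<open>c \<in> X\<close> x \<open>b \<longlonglongrightarrow> c\<close>])
qed

lemma deriv_functional_in_nabla_iter:
  assumes nf: "nabla_is_function p X f" and X: "X \<subseteq> closure (interior X)"
  shows "m \<le> p \<Longrightarrow> \<gamma> \<in> MI m \<Longrightarrow> a \<in> X \<Longrightarrow> \<exists>l. (a, deriv_functional p \<gamma> a, l) \<in> nabla_iter p X f (Suc m)"
proof (induction m arbitrary: \<gamma> a)
  case 0
  then show ?case
    using Phi0_in_nabla_iter[OF "0.prems"(3)] by (auto simp: MI_0 deriv_functional_0)
next
  case (Suc m)
  show ?case
  proof (cases "mideg \<gamma> \<le> m")
    case True
    then obtain l where "(a, deriv_functional p \<gamma> a, l) \<in> nabla_iter p X f (Suc m)"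
      using Suc by (auto simp: MI_def)
    then show ?thesis
      using nabla_iter_mono[of "Suc m" "Suc (Suc m)" p X f] by auto
  next
    case False
    with Suc.prems(2) have "mideg \<gamma> = Suc m"
      by (simp add: MI_def)
    then obtain \<gamma>\<^sub>0 i where \<gamma>: "\<gamma> = \<gamma>\<^sub>0(i := Suc (\<gamma>\<^sub>0 i))" and "mideg \<gamma>\<^sub>0 = m"
      by (rule mideg_Suc_cases)
    have "Suc (Suc m) \<le> 2 * (rdim p X + 1)"
      using Suc.prems(1) rdim_gt[of p X] by simp
    moreover have "\<exists>l. (x, deriv_functional p \<gamma>\<^sub>0 x, l) \<in> nabla_iter p X f (Suc m)" if "x \<in> X" for x
      using Suc.IH[of \<gamma>\<^sub>0 x] Suc.prems(1) \<open>mideg \<gamma>\<^sub>0 = m\<close> that by (simp add: MI_def)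
    ultimately show ?thesis
      unfolding \<gamma> using Suc.prems(1,3) \<open>mideg \<gamma>\<^sub>0 = m\<close>
      by (intro deriv_functional_in_nabla_iter_Suc[OF nf X, of \<gamma>\<^sub>0 m]) auto
  qed
qed

section \<open>The Whitney field\<close>

definition taylor_remainder_quotient ::
    "nat \<Rightarrow> (('n::finite \<Rightarrow> nat) \<Rightarrow> real^'n \<Rightarrow> real) \<Rightarrow> ('n \<Rightarrow> nat) \<Rightarrow> real^'n \<Rightarrow> real^'n \<Rightarrow> real" where
  "taylor_remainder_quotient p F \<alpha> a b =
     (F \<alpha> b - (\<Sum>\<beta>\<in>MI (p - mideg \<alpha>). F (\<lambda>i. \<alpha> i + \<beta> i) a * mipow (b - a) \<beta> / mifact \<beta>))
       / norm (b - a) ^ (p - mideg \<alpha>)"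

lemma DeltaF_taylor_remainder:
  assumes "a \<in> X" "b \<in> X" "a \<noteq> b" "\<alpha> \<in> MI p"
    and F: "\<And>\<gamma> x. \<gamma> \<in> MI p \<Longrightarrow> x \<in> X \<Longrightarrow> (x, deriv_functional p \<gamma> x, F \<gamma> x) \<in> rhoF p X \<Psi>"
  shows "(a, b, \<lambda>\<delta>. 0, taylor_remainder_quotient p F \<alpha> a b) \<in> DeltaF p X (rhoF p X \<Psi>)"
proof -
  define q where "q = p - mideg \<alpha>"
  define t where "t = 1 / norm (b - a) ^ q"
  define w where "w \<beta> = - t * (mipow (b - a) \<beta> / mifact \<beta>)" for \<beta>
  have "0 \<le> t"
    by (simp add: t_def)
  have "norm (a - b) ^ q * t = 1"
    using assms(3) by (simp add: t_def norm_minus_commute)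
  have sum_in_MI: "(\<lambda>i. \<alpha> i + \<beta> i) \<in> MI p" if "\<beta> \<in> MI q" for \<beta>
    using assms(4) that by (simp add: MI_def q_def mideg_add)
  have "(a, \<lambda>\<delta>. \<Sum>\<beta>\<in>MI q. w \<beta> * deriv_functional p (\<lambda>i. \<alpha> i + \<beta> i) a \<delta>,
      \<Sum>\<beta>\<in>MI q. w \<beta> * F (\<lambda>i. \<alpha> i + \<beta> i) a) \<in> rhoF p X \<Psi>"
    using assms(1) finite_MI F[OF sum_in_MI assms(1)] by (rule rhoF_sum)
  moreover have "(b, \<lambda>\<delta>. t * deriv_functional p \<alpha> b \<delta>, t * F \<alpha> b) \<in> rhoF p X \<Psi>"
    using F[OF assms(4,2)] by (rule rhoF_scale)
  moreover have
    "norm (a - b) ^ (p - mideg \<gamma>) * \<bar>dcomp p (\<lambda>\<delta>. t * deriv_functional p \<alpha> b \<delta>) \<gamma> b\<bar> \<le> 1"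
    if "\<gamma> \<in> MI p" for \<gamma>
  proof (cases "\<gamma> = \<alpha>")
    case True
    then show ?thesis
      using \<open>norm (a - b) ^ q * t = 1\<close> \<open>0 \<le> t\<close>
      unfolding dcomp_scale dcomp_deriv_functional[OF that] by (simp add: q_def)
  qed (simp add: dcomp_scale dcomp_deriv_functional[OF that])
  ultimately have "(a, b, \<lambda>\<delta>. (\<Sum>\<beta>\<in>MI q. w \<beta> * deriv_functional p (\<lambda>i. \<alpha> i + \<beta> i) a \<delta>)
        + t * deriv_functional p \<alpha> b \<delta>,
      (\<Sum>\<beta>\<in>MI q. w \<beta> * F (\<lambda>i. \<alpha> i + \<beta> i) a) + t * F \<alpha> b) \<in> DeltaF p X (rhoF p X \<Psi>)"
    using assms(1,2) by (intro DeltaF_I) auto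
  moreover have "(\<Sum>\<beta>\<in>MI q. w \<beta> * deriv_functional p (\<lambda>i. \<alpha> i + \<beta> i) a \<delta>)
      + t * deriv_functional p \<alpha> b \<delta> = 0" for \<delta>
    using deriv_functional_taylor[of \<alpha> p b \<delta> a] assms(4)
    by (simp add: w_def q_def MI_def sum_distrib_left sum_negf algebra_simps)
  moreover have "(\<Sum>\<beta>\<in>MI q. w \<beta> * F (\<lambda>i. \<alpha> i + \<beta> i) a) + t * F \<alpha> b
      = taylor_remainder_quotient p F \<alpha> a b"
    unfolding taylor_remainder_quotient_def q_def[symmetric]
    by (simp add: w_def t_def sum_distrib_left sum_negf sum_divide_distrib diff_divide_distrib
        algebra_simps)
  ultimately show ?thesis
    by simp
qed

lemma whitney_field_of_values_on_deriv_functionals: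
  fixes X :: "(real^'n::finite) set"
  assumes nf: "nabla_is_function p X f" and k: "Suc (Suc k) \<le> 2 * (rdim p X + 1)"
    and F: "\<And>\<gamma> x. \<gamma> \<in> MI p \<Longrightarrow> x \<in> X \<Longrightarrow>
      (x, deriv_functional p \<gamma> x, F \<gamma> x) \<in> nabla_iter p X f (Suc k)"
  shows "whitney_field p X F"
  unfolding whitney_field_def taylor_remainder_quotient_def[symmetric] tendsto_at_iff_sequentially
proof (intro ballI allI impI)
  fix c and \<alpha> :: "'n \<Rightarrow> nat" and P
  assume "c \<in> X" "\<alpha> \<in> MI p" and P: "\<forall>j. P j \<in> {(a, b). a \<in> X \<and> b \<in> X \<and> a \<noteq> b} - {(c, c)}"
    and "P \<longlonglongrightarrow> (c, c)"
  define a where "a j = fst (P j)" for j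
  define b where "b j = snd (P j)" for j
  have "a \<longlonglongrightarrow> c" "b \<longlonglongrightarrow> c"
    unfolding a_def b_def using tendsto_fst[OF \<open>P \<longlonglongrightarrow> (c, c)\<close>] tendsto_snd[OF \<open>P \<longlonglongrightarrow> (c, c)\<close>]
    by simp_all
  moreover have "a j \<in> X" "b j \<in> X" "a j \<noteq> b j" for j
    using P[rule_format, of j] unfolding a_def b_def by (cases "P j", simp)+
  then have "(a j, b j, \<lambda>\<delta>. 0, taylor_remainder_quotient p F \<alpha> (a j) (b j))
      \<in> DeltaF p X (nabla_iter p X f (Suc k))" for j
    unfolding nabla_iter_Suc
    by (intro DeltaF_taylor_remainder \<open>\<alpha> \<in> MI p\<close>) (auto simp: F[unfolded nabla_iter_Suc])
  ultimately have "(\<lambda>j. taylor_remainder_quotient p F \<alpha> (a j) (b j)) \<longlonglongrightarrow> 0"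
    by (rule DeltaF_zero_functional_tendsto_0[OF nf k \<open>c \<in> X\<close>])
  then show "((\<lambda>(a, b). taylor_remainder_quotient p F \<alpha> a b) \<circ> P) \<longlonglongrightarrow> 0"
    by (simp add: a_def b_def o_def case_prod_beta)
qed

theorem theorem4p21:
  fixes X U :: "(real^'n::finite) set" and f :: "(real^'n) \<Rightarrow> real" and p :: nat
  assumes "open U" and "X \<subseteq> U"
    and "X = U \<inter> closure (interior X)"
    and "nabla_is_function p X f"
  shows "\<exists>F. whitney_field p X F \<and> (\<forall>x\<in>X. F (\<lambda>i. 0) x = f x)"
proof -
  \<comment> \<open>Only \<open>X \<subseteq> closure (interior X)\<close> is used.\<close>
  have X: "X \<subseteq> closure (interior X)"
    using assms(3) by blast
  have k: "Suc (Suc p) \<le> 2 * (rdim p X + 1)"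
    using rdim_gt[of p X] by simp
  define F where "F \<gamma> a = (if \<gamma> = (\<lambda>i. 0) then f a
      else SOME l. (a, deriv_functional p \<gamma> a, l) \<in> nabla_iter p X f (Suc p))" for \<gamma> a
  have "(a, deriv_functional p \<gamma> a, F \<gamma> a) \<in> nabla_iter p X f (Suc p)" if "\<gamma> \<in> MI p" "a \<in> X" for \<gamma> a
    using deriv_functional_in_nabla_iter[OF assms(4) X order_refl that]
      Phi0_in_nabla_iter[OF \<open>a \<in> X\<close>]
    unfolding F_def by (auto simp: deriv_functional_0 intro: someI_ex)
  then have "whitney_field p X F"
    by (rule whitney_field_of_values_on_deriv_functionals[OF assms(4) k])
  moreover have "\<forall>x\<in>X. F (\<lambda>i. 0) x = f x"
    by (simp add: F_def)
  ultimately show ?thesis by blast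
qed

end
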